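(* Let $n\ge 3$ and $m\ge 2$, let $K_n$ be the complete graph on $n$ vertices and $C_{2m}$ the cycle graph on $2m$ vertices. Then the set of distinct distance eigenvalues (eigenvalues of the distance matrix) of $K_n\otimes C_{2m}$ consists of the numbers $2(n+1)+nm^2$; $2(n-1)+4\cos\left(\frac{2p\pi}{m}\right)$ for $p=1,2,\ldots,m-1$; $2(n-1)+4\cos\left(\frac{(2q-1)\pi}{m}\right)-n\,\mathrm{cosec}^{2}\left(\frac{(2q-1)\pi}{2m}\right)$ for $q=1,2,\ldots,m$; $4\cos\left(\frac{\pi}{m}r\right)-2$ for $r=0,1,\ldots,2m-1$.
   Context: The Kronecker product $G\otimes H$ of simple graphs $G,H$ has vertex set $V(G)\times V(H)$, with $(x,y)$ adjacent to $(u,v)$ if and only if $xu\in E(G)$ and $yv\in E(H)$. The distance matrix of a connected graph has $(u,v)$ entry equal to the length of a shortest $u$–$v$ path. *)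

theory Defs
  imports Complex_Main
begin

text \<open>Simple graphs are given by a finite vertex set together with a symmetric,
irreflexive adjacency relation.\<close>

definition complete_adj :: "nat \<Rightarrow> nat \<Rightarrow> nat \<Rightarrow> bool" where
  "complete_adj n i j \<longleftrightarrow> i < n \<and> j < n \<and> i \<noteq> j"

definition cycle_adj :: "nat \<Rightarrow> nat \<Rightarrow> nat \<Rightarrow> bool" where
  "cycle_adj N i j \<longleftrightarrow> i < N \<and> j < N \<and> (j = (i + 1) mod N \<or> i = (j + 1) mod N)"

definition kron_adj :: "('a \<Rightarrow> 'a \<Rightarrow> bool) \<Rightarrow> ('b \<Rightarrow> 'b \<Rightarrow> bool)
    \<Rightarrow> 'a \<times> 'b \<Rightarrow> 'a \<times> 'b \<Rightarrow> bool" where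
  "kron_adj G H p q \<longleftrightarrow> G (fst p) (fst q) \<and> H (snd p) (snd q)"

fun walk_of_len :: "('a \<Rightarrow> 'a \<Rightarrow> bool) \<Rightarrow> nat \<Rightarrow> 'a \<Rightarrow> 'a \<Rightarrow> bool" where
  "walk_of_len E 0 u v \<longleftrightarrow> u = v"
| "walk_of_len E (Suc k) u v \<longleftrightarrow> (\<exists>w. E u w \<and> walk_of_len E k w v)"

definition graph_dist :: "('a \<Rightarrow> 'a \<Rightarrow> bool) \<Rightarrow> 'a \<Rightarrow> 'a \<Rightarrow> nat" where
  "graph_dist E u v = (LEAST k. walk_of_len E k u v)"

text \<open>Distance eigenvalue: eigenvalue of the distance matrix indexed by V.
The distance matrix is real symmetric, so all its eigenvalues are real.\<close>
definition distance_eigenvalue :: "'a set \<Rightarrow> ('a \<Rightarrow> 'a \<Rightarrow> bool) \<Rightarrow> real \<Rightarrow> bool" where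
  "distance_eigenvalue V E \<mu> \<longleftrightarrow>
     (\<exists>x :: 'a \<Rightarrow> real. (\<exists>v\<in>V. x v \<noteq> 0) \<and>
        (\<forall>u\<in>V. (\<Sum>v\<in>V. real (graph_dist E u v) * x v) = \<mu> * x u))"

end

theory Submission
  imports Defs
begin

(* A walk in K_n \<otimes> C_2m is a pair of walks of equal length.  For n \<ge> 3, K_n has walks of
   every length between distinct vertices and of every length except 1 from a vertex to itself,
   while C_2m has a walk of length k between vertices at cyclic distance d iff k \<ge> d and
   k \<equiv> d (mod 2).  So the distance from (i, j) to (i', j') only depends on whether i = i' and on
   j' - j: the distance matrix is I_n \<otimes> S + (J_n - I_n) \<otimes> O with circulant S and O.
   The characters of Z/2m diagonalise S and O simultaneously; on the character r the matrix acts
   as I_n \<otimes> s_r + (J_n - I_n) \<otimes> o_r, with eigenvalues s_r - o_r (on vectors orthogonal to the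
   all-ones vector) and s_r + (n - 1) o_r.  The Fourier coefficients of the cyclic distance follow
   from its second difference, which is supported on 0 and m. *)

section \<open>Walks and distances in the Kronecker product\<close>

lemma walk_of_len_kron_adj:
  "walk_of_len (kron_adj G H) k (a, b) (c, d) \<longleftrightarrow> walk_of_len G k a c \<and> walk_of_len H k b d"
  by (induction k arbitrary: a b) (auto simp: kron_adj_def)

lemma ex_less_distinct_from_two:
  fixes n :: nat
  assumes "n \<ge> 3"
  shows "\<exists>w<n. w \<noteq> i \<and> w \<noteq> i'"
proof -
  have "card {i, i'} < card {..<n}"
    using assms by (simp add: card_insert_if)
  then show ?thesis
    by (metis card_mono finite_insert finite.emptyI insertCI lessThan_iff not_le subsetI)
qed

lemma walk_of_len_complete_adj:
  assumes "n \<ge> 3" "i < n" "i' < n"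
  shows "walk_of_len (complete_adj n) k i i' \<longleftrightarrow> (if i = i' then k \<noteq> 1 else k \<ge> 1)"
  using assms(2)
proof (induction k arbitrary: i)
  case 0
  then show ?case by simp
next
  case (Suc k)
  have "\<exists>w. complete_adj n i w \<and> walk_of_len (complete_adj n) k w i'" if "k \<noteq> 0"
  proof -
    obtain w where "w < n" "w \<noteq> i" "w \<noteq> i'"
      using ex_less_distinct_from_two[OF assms(1)] by blast
    moreover have "walk_of_len (complete_adj n) k w i'"
      using Suc.IH[OF \<open>w < n\<close>] \<open>w \<noteq> i'\<close> that by simp
    ultimately show ?thesis
      using Suc.prems by (auto simp: complete_adj_def)
  qed
  then show ?case
  proof (cases "k = 0")
    case True
    then show ?thesis
      using Suc.prems assms(3) by (auto simp: complete_adj_def)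
  qed simp
qed

definition cycle_dist :: "nat \<Rightarrow> int \<Rightarrow> nat" where
  "cycle_dist N t = nat (min (t mod int N) (int N - t mod int N))"

lemma cycle_dist_cases:
  assumes "N > 0"
  shows "int (cycle_dist N t) \<le> t mod int N" "int (cycle_dist N t) \<le> int N - t mod int N"
    "int (cycle_dist N t) = t mod int N \<or> int (cycle_dist N t) = int N - t mod int N"
proof -
  have "0 \<le> t mod int N" "t mod int N < int N"
    using assms by auto
  then show "int (cycle_dist N t) \<le> t mod int N" "int (cycle_dist N t) \<le> int N - t mod int N"
    "int (cycle_dist N t) = t mod int N \<or> int (cycle_dist N t) = int N - t mod int N"
    unfolding cycle_dist_def by linarith+
qed

lemma cycle_dist_mod [simp]: "cycle_dist N (t mod int N) = cycle_dist N t"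
  by (simp add: cycle_dist_def)

lemma cycle_dist_uminus [simp]: "cycle_dist N (- t) = cycle_dist N t"
  by (auto simp: cycle_dist_def zmod_zminus1_eq_if)

lemma cycle_dist_eq_min:
  assumes "0 \<le> t" "t \<le> int N"
  shows "int (cycle_dist N t) = min t (int N - t)"
proof (cases "t = int N")
  case False
  then show ?thesis
    using assms by (simp add: cycle_dist_def)
qed (simp add: cycle_dist_def)

lemma cycle_dist_of_nat:
  assumes "k < N"
  shows "cycle_dist N (int k) = min k (N - k)"
  using cycle_dist_eq_min[of "int k" N] assms by simp

lemma cycle_adj_iff:
  assumes "j < N" "w < N"
  shows "cycle_adj N j w \<longleftrightarrow> int w = (int j + 1) mod int N \<or> int w = (int j - 1) mod int N"
proof -
  have "w = (j + 1) mod N \<longleftrightarrow> int w = (int j + 1) mod int N"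
    by (metis of_nat_1 of_nat_add of_nat_eq_iff zmod_int)
  moreover have "j = (w + 1) mod N \<longleftrightarrow> int w = (int j - 1) mod int N"
    using assms by (cases "w + 1 = N"; cases "j = 0") (auto simp: zmod_minus1)
  ultimately show ?thesis
    using assms by (auto simp: cycle_adj_def)
qed

(* j' = j + s (mod N), where s is the net displacement of some sequence of k steps +1 or -1 *)
definition shift_reachable :: "nat \<Rightarrow> nat \<Rightarrow> nat \<Rightarrow> nat \<Rightarrow> bool" where
  "shift_reachable N k j j' \<longleftrightarrow>
     (\<exists>s::int. \<bar>s\<bar> \<le> int k \<and> even (int k - s) \<and> (int j + s) mod int N = int j')"

lemma shift_reachable_Suc_if_adj:
  assumes "j < N" "cycle_adj N j w" "shift_reachable N k w j'"
  shows "shift_reachable N (Suc k) j j'"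
proof -
  obtain s where s: "\<bar>s\<bar> \<le> int k" "even (int k - s)" "(int w + s) mod int N = int j'"
    using assms(3) unfolding shift_reachable_def by blast
  from assms(2) consider "int w = (int j + 1) mod int N" | "int w = (int j - 1) mod int N"
    using cycle_adj_iff[OF assms(1)] by (auto simp: cycle_adj_def)
  then show ?thesis
  proof cases
    case 1
    then have "(int j + (s + 1)) mod int N = int j'"
      using s(3) by (metis add.assoc add.commute mod_add_left_eq)
    then show ?thesis
      using s unfolding shift_reachable_def by (intro exI[of _ "s + 1"]) auto
  next
    case 2
    then have "(int j + (s - 1)) mod int N = int j'"
      using s(3) by (metis add_diff_eq diff_add_eq mod_add_left_eq)
    then show ?thesis
      using s unfolding shift_reachable_def by (intro exI[of _ "s - 1"]) auto
  qed
qed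

lemma shift_reachable_SucD:
  assumes "j < N" "shift_reachable N (Suc k) j j'"
  shows "\<exists>w. cycle_adj N j w \<and> shift_reachable N k w j'"
proof -
  obtain s where s: "\<bar>s\<bar> \<le> int (Suc k)" "even (int (Suc k) - s)" "(int j + s) mod int N = int j'"
    using assms(2) unfolding shift_reachable_def by blast
  define w_succ where "w_succ = nat ((int j + 1) mod int N)"
  define w_pred where "w_pred = nat ((int j - 1) mod int N)"
  have w_succ: "int w_succ = (int j + 1) mod int N" "w_succ < N"
    using assms(1) by (auto simp: w_succ_def nat_less_iff)
  have w_pred: "int w_pred = (int j - 1) mod int N" "w_pred < N"
    using assms(1) by (auto simp: w_pred_def nat_less_iff)
  have adj: "cycle_adj N j w_succ" "cycle_adj N j w_pred"
    using cycle_adj_iff[OF assms(1)] w_succ w_pred by simp_all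
  show ?thesis
  proof (cases "s \<ge> 1 \<or> s = 0")
    case True
    have "(int w_succ + (s - 1)) mod int N = int j'"
      using s(3) unfolding w_succ(1) by (metis add_diff_eq diff_add_eq mod_add_left_eq diff_add_cancel)
    then show ?thesis
      using adj(1) s True unfolding shift_reachable_def
      by (intro exI[of _ w_succ]) (auto intro!: exI[of _ "s - 1"] simp: Suc_le_eq odd_pos)
  next
    case False
    have "(int w_pred + (s + 1)) mod int N = int j'"
      using s(3) unfolding w_pred(1) by (metis add_diff_eq diff_add_eq mod_add_left_eq diff_add_cancel)
    then show ?thesis
      using adj(2) s False unfolding shift_reachable_def
      by (intro exI[of _ w_pred]) (auto intro!: exI[of _ "s + 1"])
  qed
qed

lemma walk_of_len_cycle_adj_iff_shift_reachable:
  assumes "j < N" "j' < N"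
  shows "walk_of_len (cycle_adj N) k j j' \<longleftrightarrow> shift_reachable N k j j'"
  using assms(1)
proof (induction k arbitrary: j)
  case 0
  then show ?case
    using assms(2) by (simp add: shift_reachable_def)
next
  case (Suc k)
  have "walk_of_len (cycle_adj N) k w j' \<longleftrightarrow> shift_reachable N k w j'" if "cycle_adj N j w" for w
    using Suc.IH that unfolding cycle_adj_def by blast
  then have "walk_of_len (cycle_adj N) (Suc k) j j' \<longleftrightarrow> (\<exists>w. cycle_adj N j w \<and> shift_reachable N k w j')"
    by auto
  also have "\<dots> \<longleftrightarrow> shift_reachable N (Suc k) j j'"
    using shift_reachable_Suc_if_adj[OF Suc.prems] shift_reachable_SucD[OF Suc.prems] by blast
  finally show ?case .
qed

lemma cycle_dist_le_abs:
  assumes "N > 0" "s mod int N = t mod int N"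
  shows "int (cycle_dist N t) \<le> \<bar>s\<bar>"
proof -
  define c where "c = s div int N"
  have s: "s = t mod int N + int N * c"
    using assms(2) unfolding c_def by (metis div_mult_mod_eq add.commute mult.commute)
  have "0 \<le> t mod int N" "t mod int N < int N"
    using assms(1) by simp_all
  moreover have "int N * c \<ge> 0 \<or> int N * c \<le> - int N"
    using mult_left_mono[of c "-1" "int N"] by (cases "c \<ge> 0") auto
  ultimately show ?thesis
    using s cycle_dist_cases[OF assms(1), of t] by linarith
qed

lemma cycle_dist_parity:
  assumes "even N" "N > 0" "s mod int N = t mod int N"
  shows "even (s - int (cycle_dist N t))"
proof -
  have "even (int N)"
    using assms(1) by simp
  moreover have "s - t mod int N = int N * (s div int N)"
    using assms(3) by (metis minus_mod_eq_mult_div)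
  ultimately have "even (s - t mod int N)"
    by simp
  moreover have "even (a - d)" if "even (a - r)" "d = r \<or> d = M - r" "even M" for a r d M :: int
    using that by presburger
  ultimately show ?thesis
    using cycle_dist_cases(3)[OF assms(2), of t] \<open>even (int N)\<close> by blast
qed

lemma add_mod_eq_iff:
  assumes "j' < N"
  shows "(int j + s) mod int N = int j' \<longleftrightarrow> s mod int N = (int j' - int j) mod int N"
proof -
  have "(int j + s) mod int N = int j' \<longleftrightarrow> (int j + s) mod int N = int j' mod int N"
    using assms by simp
  also have "\<dots> \<longleftrightarrow> int N dvd s - (int j' - int j)"
    by (simp add: mod_eq_dvd_iff algebra_simps)
  finally show ?thesis
    by (simp add: mod_eq_dvd_iff)
qed

lemma shift_reachable_iff_cycle_dist:
  assumes "even N" "N > 0" "j' < N"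
  shows "shift_reachable N k j j' \<longleftrightarrow>
    cycle_dist N (int j' - int j) \<le> k \<and> even (k + cycle_dist N (int j' - int j))"
    (is "_ \<longleftrightarrow> ?d \<le> k \<and> even (k + ?d)")
proof -
  define r where "r = (int j' - int j) mod int N"
  have target: "(int j + s) mod int N = int j' \<longleftrightarrow> s mod int N = r" for s
    using add_mod_eq_iff[OF assms(3)] by (simp add: r_def)
  show ?thesis
  proof
    assume "shift_reachable N k j j'"
    then obtain s where s: "\<bar>s\<bar> \<le> int k" "even (int k - s)" "s mod int N = r"
      unfolding shift_reachable_def target by blast
    then have "int ?d \<le> \<bar>s\<bar>" "even (s - int ?d)"
      using cycle_dist_le_abs[OF assms(2)] cycle_dist_parity[OF assms(1,2)] by (simp_all add: r_def)
    then show "?d \<le> k \<and> even (k + ?d)"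
      using s(1,2) by presburger
  next
    assume d: "?d \<le> k \<and> even (k + ?d)"
    have r: "0 \<le> r" "r < int N" "(r - int N) mod int N = r"
      using assms(2) by (simp_all add: r_def)
    have "even (int N)"
      using assms(1) by simp
    consider "int ?d = r" | "int ?d = int N - r"
      using cycle_dist_cases(3)[OF assms(2)] by (auto simp: r_def)
    then show "shift_reachable N k j j'"
    proof cases
      case 1
      then show ?thesis
        using d r unfolding shift_reachable_def target by (intro exI[of _ r]) auto
    next
      case 2
      then have "\<bar>r - int N\<bar> \<le> int k"
        using d r(2) by linarith
      moreover have "even (int k - (r - int N))"
        using 2 d \<open>even (int N)\<close> by presburger
      ultimately show ?thesis
        using r unfolding shift_reachable_def target by (intro exI[of _ "r - int N"]) simp
    qed
  qed
qed

lemma walk_of_len_cycle_adj: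
  assumes "even N" "j < N" "j' < N"
  shows "walk_of_len (cycle_adj N) k j j' \<longleftrightarrow>
    cycle_dist N (int j' - int j) \<le> k \<and> even (k + cycle_dist N (int j' - int j))"
  using walk_of_len_cycle_adj_iff_shift_reachable[OF assms(2,3)]
    shift_reachable_iff_cycle_dist[OF assms(1) _ assms(3)] assms(2) by simp

lemma Least_walk_length:
  fixes d :: nat
  shows "(LEAST k. (if b then k \<noteq> 1 else k \<ge> 1) \<and> d \<le> k \<and> even (k + d))
       = d + (if b then (if d = 1 then 2 else 0) else (if d = 0 then 2 else 0))" (is "_ = ?D")
proof (rule Least_equality)
  show "(if b then ?D \<noteq> 1 else ?D \<ge> 1) \<and> d \<le> ?D \<and> even (?D + d)"
    by auto
next
  fix k
  assume k: "(if b then k \<noteq> 1 else k \<ge> 1) \<and> d \<le> k \<and> even (k + d)"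
  then have "k \<noteq> d + 1"
    by auto
  then show "?D \<le> k"
    using k by (cases b) auto
qed

definition dist_same_row :: "nat \<Rightarrow> int \<Rightarrow> real" where
  "dist_same_row N t = real (cycle_dist N t) + (if cycle_dist N t = 1 then 2 else 0)"

definition dist_other_row :: "nat \<Rightarrow> int \<Rightarrow> real" where
  "dist_other_row N t = real (cycle_dist N t) + (if cycle_dist N t = 0 then 2 else 0)"

lemma dist_same_row_mod [simp]: "dist_same_row N (t mod int N) = dist_same_row N t"
  and dist_same_row_uminus [simp]: "dist_same_row N (- t) = dist_same_row N t"
  and dist_other_row_mod [simp]: "dist_other_row N (t mod int N) = dist_other_row N t"
  and dist_other_row_uminus [simp]: "dist_other_row N (- t) = dist_other_row N t"
  by (simp_all add: dist_same_row_def dist_other_row_def)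

lemma graph_dist_kron_complete_cycle:
  assumes "n \<ge> 3" "even N" "i < n" "i' < n" "j < N" "j' < N"
  shows "real (graph_dist (kron_adj (complete_adj n) (cycle_adj N)) (i, j) (i', j'))
       = (if i = i' then dist_same_row N (int j' - int j) else dist_other_row N (int j' - int j))"
proof -
  define d where "d = cycle_dist N (int j' - int j)"
  have "walk_of_len (kron_adj (complete_adj n) (cycle_adj N)) k (i, j) (i', j')
        \<longleftrightarrow> (if i = i' then k \<noteq> 1 else k \<ge> 1) \<and> d \<le> k \<and> even (k + d)" for k
    unfolding walk_of_len_kron_adj walk_of_len_complete_adj[OF assms(1,3,4)]
      walk_of_len_cycle_adj[OF assms(2,5,6)] d_def by simp
  then have "graph_dist (kron_adj (complete_adj n) (cycle_adj N)) (i, j) (i', j')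
      = d + (if i = i' then (if d = 1 then 2 else 0) else (if d = 0 then 2 else 0))"
    unfolding graph_dist_def by (simp only: Least_walk_length)
  then show ?thesis
    by (simp add: dist_same_row_def dist_other_row_def d_def)
qed

section \<open>Fourier analysis on the integers modulo N\<close>

lemma sum_lessThan_periodic_shift:
  fixes f :: "int \<Rightarrow> 'a::cancel_comm_monoid_add"
  assumes "\<And>t. f (t mod int N) = f t"
  shows "(\<Sum>k<N. f (int k + c)) = (\<Sum>k<N. f (int k))"
proof -
  have shift_nat: "(\<Sum>k<N. f (int k + int b)) = (\<Sum>k<N. f (int k))" for b
  proof (induction b)
    case (Suc b)
    define g where "g k = f (int k + int b)" for k
    have "g N = g 0"
      unfolding g_def using assms[of "int N + int b"] assms[of "int b"] by simp
    then have "g 0 + (\<Sum>k<N. g (Suc k)) = g 0 + (\<Sum>k<N. g k)"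
      using sum.lessThan_Suc_shift[of g N] sum.lessThan_Suc[of g N] by (simp add: add.commute)
    then have "(\<Sum>k<N. g (Suc k)) = (\<Sum>k<N. g k)"
      by simp
    then show ?case
      using Suc.IH by (simp add: g_def add_ac)
  qed simp
  have "f (int k + c) = f (int k + int (nat (c mod int N)))" if "k < N" for k
  proof -
    have "int (nat (c mod int N)) = c mod int N"
      using that by simp
    then show ?thesis
      by (metis assms mod_add_right_eq)
  qed
  then have "(\<Sum>k<N. f (int k + c)) = (\<Sum>k<N. f (int k + int (nat (c mod int N))))"
    by simp
  then show ?thesis
    by (simp only: shift_nat)
qed

definition fourier_char :: "nat \<Rightarrow> nat \<Rightarrow> int \<Rightarrow> complex" where
  "fourier_char N r t = cis (2 * pi * real r * of_int t / real N)"

definition dft :: "nat \<Rightarrow> (int \<Rightarrow> real) \<Rightarrow> nat \<Rightarrow> complex" where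
  "dft N g r = (\<Sum>k<N. complex_of_real (g (int k)) * fourier_char N r (int k))"

lemma fourier_char_add: "fourier_char N r (a + b) = fourier_char N r a * fourier_char N r b"
  unfolding fourier_char_def cis_mult by (simp add: algebra_simps add_divide_distrib)

lemma fourier_char_0 [simp]: "fourier_char N r 0 = 1"
  by (simp add: fourier_char_def)

lemma Re_fourier_char: "Re (fourier_char N r t) = cos (2 * pi * real r * of_int t / real N)"
  by (simp add: fourier_char_def)

lemma fourier_char_multiple:
  assumes "N > 0"
  shows "fourier_char N r (int N * q) = 1"
proof -
  have "2 * pi * real r * of_int (int N * q) / real N = 2 * pi * of_int (int r * q)"
    using assms by simp
  then show ?thesis
    unfolding fourier_char_def by (metis Ints_of_int cis_multiple_2pi)
qed

lemma fourier_char_mod: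
  assumes "N > 0"
  shows "fourier_char N r (t mod int N) = fourier_char N r t"
  using fourier_char_add[of N r "t mod int N" "int N * (t div int N)"]
  by (simp add: fourier_char_multiple[OF assms])

lemma fourier_char_half:
  assumes "m > 0"
  shows "fourier_char (2 * m) r (int m) = (- 1) ^ r"
proof -
  have "fourier_char (2 * m) r (int m) = cis (real r * pi)"
    using assms by (simp add: fourier_char_def mult.commute)
  also have "\<dots> = cis pi ^ r"
    by (simp only: DeMoivre)
  finally show ?thesis
    by simp
qed

lemma fourier_char_add_uminus:
  "fourier_char N r t + fourier_char N r (- t)
     = complex_of_real (2 * cos (2 * pi * real r * of_int t / real N))"
  by (simp add: fourier_char_def complex_eq_iff)

lemma dft_add: "dft N (\<lambda>t. f t + g t) r = dft N f r + dft N g r"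
  by (simp add: dft_def sum.distrib distrib_right)

lemma dft_cmult: "dft N (\<lambda>t. c * f t) r = complex_of_real c * dft N f r"
  by (simp add: dft_def sum_distrib_left mult.assoc)

lemma dft_shift_invariant:
  assumes "N > 0" "\<And>t. g (t mod int N) = g t"
  shows "(\<Sum>k<N. complex_of_real (g (int k + c)) * fourier_char N r (int k + c)) = dft N g r"
  unfolding dft_def
  by (rule sum_lessThan_periodic_shift[where f = "\<lambda>t. complex_of_real (g t) * fourier_char N r t"])
    (simp add: assms fourier_char_mod)

lemma dft_translate:
  assumes "N > 0" "\<And>t. g (t mod int N) = g t"
  shows "dft N (\<lambda>t. g (t + c)) r = fourier_char N r (- c) * dft N g r"
proof -
  have "dft N g r = (\<Sum>k<N. complex_of_real (g (int k + c)) * fourier_char N r (int k + c))"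
    using dft_shift_invariant[where g = g, OF assms] by simp
  also have "\<dots> = fourier_char N r c * dft N (\<lambda>t. g (t + c)) r"
    by (simp add: dft_def fourier_char_add sum_distrib_left mult_ac)
  finally have "fourier_char N r (- c) * dft N g r
      = fourier_char N r (- c) * fourier_char N r c * dft N (\<lambda>t. g (t + c)) r"
    by (simp add: mult.assoc)
  also have "fourier_char N r (- c) * fourier_char N r c = 1"
    by (simp flip: fourier_char_add)
  finally show ?thesis
    by simp
qed

lemma dft_second_difference:
  assumes "N > 0" "\<And>t. g (t mod int N) = g t"
  shows "dft N (\<lambda>t. g (t - 1) + g (t + 1)) r
       = complex_of_real (2 * cos (2 * pi * real r / real N)) * dft N g r"
proof -
  have "dft N (\<lambda>t. g (t - 1) + g (t + 1)) r
      = (fourier_char N r 1 + fourier_char N r (- 1)) * dft N g r"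
    using dft_translate[where g = g and c = "- 1", OF assms]
      dft_translate[where g = g and c = 1, OF assms]
    by (simp add: dft_add algebra_simps)
  then show ?thesis
    by (simp only: fourier_char_add_uminus) simp
qed

lemma circulant_mult_fourier_char:
  assumes "N > 0" "\<And>t. g (t mod int N) = g t"
  shows "(\<Sum>k<N. complex_of_real (g (int k - j)) * fourier_char N r (int k))
       = dft N g r * fourier_char N r j"
proof -
  have "(\<Sum>k<N. complex_of_real (g (int k - j)) * fourier_char N r (int k))
      = (\<Sum>k<N. complex_of_real (g (int k + - j)) * fourier_char N r (int k + - j))
          * fourier_char N r j"
    by (simp add: sum_distrib_right mult.assoc flip: fourier_char_add)
  then show ?thesis
    using dft_shift_invariant[where g = g and c = "- j", OF assms] by simp
qed

lemma circulant_mult_cos: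
  assumes "N > 0" "\<And>t. g (t mod int N) = g t" "dft N g r = complex_of_real a"
  shows "(\<Sum>k<N. g (int k - int j) * cos (2 * pi * real r * real k / real N))
       = a * cos (2 * pi * real r * real j / real N)"
proof -
  have "Re (\<Sum>k<N. complex_of_real (g (int k - int j)) * fourier_char N r (int k))
      = Re (complex_of_real a * fourier_char N r (int j))"
    using circulant_mult_fourier_char[where g = g, OF assms(1,2)] assms(3) by simp
  then show ?thesis
    by (simp add: Re_fourier_char)
qed

lemma fourier_transform_circulant_mult:
  assumes "N > 0" "\<And>t. g (t mod int N) = g t" "\<And>t. g (- t) = g t"
  shows "(\<Sum>j<N. complex_of_real (\<Sum>k<N. g (int k - int j) * y k) * fourier_char N r (int j))
       = dft N g r * (\<Sum>k<N. complex_of_real (y k) * fourier_char N r (int k))"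
proof -
  have "(\<Sum>j<N. complex_of_real (\<Sum>k<N. g (int k - int j) * y k) * fourier_char N r (int j))
      = (\<Sum>j<N. \<Sum>k<N. complex_of_real (y k) *
           (complex_of_real (g (int j - int k)) * fourier_char N r (int j)))"
    using assms(3)[of "int k - int j" for j k] by (simp add: sum_distrib_left sum_distrib_right mult_ac)
  also have "\<dots> = (\<Sum>k<N. complex_of_real (y k) *
           (\<Sum>j<N. complex_of_real (g (int j - int k)) * fourier_char N r (int j)))"
    by (subst sum.swap) (simp add: sum_distrib_left)
  also have "\<dots> = (\<Sum>k<N. complex_of_real (y k) * (dft N g r * fourier_char N r (int k)))"
    using circulant_mult_fourier_char[where g = g, OF assms(1,2)] by simp
  finally show ?thesis
    by (simp add: sum_distrib_left mult_ac)
qed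

lemma sum_fourier_char:
  assumes "N > 0" "\<bar>d\<bar> < int N"
  shows "(\<Sum>r<N. fourier_char N r d) = (if d = 0 then of_nat N else 0)"
proof (cases "d = 0")
  case False
  define z where "z = fourier_char N 1 d"
  have z_pow: "fourier_char N r d = z ^ r" for r
    unfolding z_def fourier_char_def DeMoivre by (simp add: field_simps)
  have "z ^ N = 1"
    using fourier_char_multiple[OF assms(1), of 1 d] by (simp add: z_pow[symmetric] fourier_char_def)
  have "z \<noteq> 1"
  proof
    assume "z = 1"
    then have "cos (2 * pi * of_int d / real N) = 1"
      unfolding z_def fourier_char_def by (metis cis.sel(1) mult.right_neutral of_nat_1 one_complex.sel(1))
    then obtain q :: int where "2 * pi * of_int d / real N = of_int q * 2 * pi"
      by (auto simp: cos_one_2pi_int)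
    then have "d = q * int N"
      using assms(1) by (simp add: field_simps) (metis of_int_eq_iff of_int_mult of_int_of_nat_eq)
    then show False
      using False assms(2) by (cases "q = 0") (auto simp: abs_mult)
  qed
  have "(\<Sum>r<N. fourier_char N r d) = (z ^ N - 1) / (z - 1)"
    unfolding z_pow using \<open>z \<noteq> 1\<close> by (rule geometric_sum)
  then show ?thesis
    using \<open>z ^ N = 1\<close> False by simp
qed simp

lemma fourier_transform_eq_0_imp_eq_0:
  fixes y :: "nat \<Rightarrow> complex"
  assumes "N > 0" "\<And>r. r < N \<Longrightarrow> (\<Sum>k<N. y k * fourier_char N r (int k)) = 0" "j < N"
  shows "y j = 0"
proof -
  have "0 = (\<Sum>r<N. (\<Sum>k<N. y k * fourier_char N r (int k)) * fourier_char N r (- int j))"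
    using assms(2) by simp
  also have "\<dots> = (\<Sum>k<N. y k * (\<Sum>r<N. fourier_char N r (int k - int j)))"
    unfolding sum_distrib_left sum_distrib_right
    by (subst sum.swap) (simp add: mult.assoc flip: fourier_char_add)
  also have "\<dots> = (\<Sum>k<N. if k = j then y k * of_nat N else 0)"
    using assms(3) by (intro sum.cong refl) (simp add: sum_fourier_char[OF assms(1)])
  also have "\<dots> = y j * of_nat N"
    using assms(3) by simp
  finally show ?thesis
    using assms(1) by simp
qed

section \<open>Block-circulant kernels\<close>

definition kernel_eigenvalue :: "'a set \<Rightarrow> ('a \<Rightarrow> 'a \<Rightarrow> real) \<Rightarrow> real \<Rightarrow> bool" where
  "kernel_eigenvalue V M \<mu> \<longleftrightarrow>
     (\<exists>x. (\<exists>v\<in>V. x v \<noteq> 0) \<and> (\<forall>u\<in>V. (\<Sum>v\<in>V. M u v * x v) = \<mu> * x u))"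

lemma distance_eigenvalue_iff_kernel_eigenvalue:
  "distance_eigenvalue V E = kernel_eigenvalue V (\<lambda>u v. real (graph_dist E u v))"
  by (simp add: fun_eq_iff distance_eigenvalue_def kernel_eigenvalue_def)

lemma kernel_eigenvalue_cong:
  assumes "\<And>u v. u \<in> V \<Longrightarrow> v \<in> V \<Longrightarrow> M u v = M' u v"
  shows "kernel_eigenvalue V M = kernel_eigenvalue V M'"
proof -
  have "(\<Sum>v\<in>V. M u v * x v) = (\<Sum>v\<in>V. M' u v * x v)" if "u \<in> V" for u x
    using that assms by (intro sum.cong) simp_all
  then have "(\<forall>u\<in>V. (\<Sum>v\<in>V. M u v * x v) = \<mu> * x u) \<longleftrightarrow>
      (\<forall>u\<in>V. (\<Sum>v\<in>V. M' u v * x v) = \<mu> * x u)" for x \<mu>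
    by simp
  then show ?thesis
    unfolding kernel_eigenvalue_def by simp
qed

lemma all_ones_plus_scalar_eigenvalue_cases:
  fixes X :: "nat \<Rightarrow> complex"
  assumes "\<And>i. i < n \<Longrightarrow> a * (\<Sum>i'<n. X i') + b * X i = \<mu> * X i" "i\<^sub>0 < n" "X i\<^sub>0 \<noteq> 0"
  shows "\<mu> = b \<or> \<mu> = b + of_nat n * a"
proof (cases "\<mu> = b")
  case False
  define Y where "Y = (\<Sum>i<n. X i)"
  have X: "(\<mu> - b) * X i = a * Y" if "i < n" for i
    using assms(1)[OF that] by (simp add: Y_def algebra_simps)
  have "(\<mu> - b) * Y = of_nat n * a * Y"
    using X by (simp add: Y_def sum_distrib_left mult.assoc)
  moreover have "Y \<noteq> 0"
    using X[OF assms(2)] assms(3) False by auto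
  ultimately have "\<mu> - b = of_nat n * a"
    by simp
  then show ?thesis
    by (simp add: algebra_simps)
qed simp

(* I_n \<otimes> C(g\<^sub>s) + (J_n - I_n) \<otimes> C(g\<^sub>o), where C(g) is the circulant matrix with entries g (j' - j) *)
fun block_circulant :: "(int \<Rightarrow> real) \<Rightarrow> (int \<Rightarrow> real) \<Rightarrow> nat \<times> nat \<Rightarrow> nat \<times> nat \<Rightarrow> real"
  where
  "block_circulant g\<^sub>s g\<^sub>o (i, j) (i', j') =
     (if i = i' then g\<^sub>s (int j' - int j) else g\<^sub>o (int j' - int j))"

lemma block_circulant_mult:
  assumes "i < n"
  shows "(\<Sum>v\<in>{..<n} \<times> {..<N}. block_circulant g\<^sub>s g\<^sub>o (i, j) v * x v)
       = (\<Sum>k<N. g\<^sub>o (int k - int j) * (\<Sum>i'<n. x (i', k)))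
         + (\<Sum>k<N. g\<^sub>s (int k - int j) * x (i, k)) - (\<Sum>k<N. g\<^sub>o (int k - int j) * x (i, k))"
proof -
  have "(\<Sum>v\<in>{..<n} \<times> {..<N}. block_circulant g\<^sub>s g\<^sub>o (i, j) v * x v)
      = (\<Sum>i'<n. \<Sum>k<N. g\<^sub>o (int k - int j) * x (i', k)
           + (if i' = i then g\<^sub>s (int k - int j) * x (i, k) - g\<^sub>o (int k - int j) * x (i, k) else 0))"
    by (auto simp: sum.cartesian_product intro!: sum.cong)
  also have "\<dots> = (\<Sum>k<N. \<Sum>i'<n. g\<^sub>o (int k - int j) * x (i', k))
      + (\<Sum>k<N. \<Sum>i'<n. if i' = i then g\<^sub>s (int k - int j) * x (i, k) - g\<^sub>o (int k - int j) * x (i, k) else 0)"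
    by (simp add: sum.distrib sum.swap[of _ "{..<N}" "{..<n}"])
  finally show ?thesis
    using assms by (simp add: sum_distrib_left sum_subtractf)
qed

lemma block_circulant_eigenvalue_diff:
  assumes "n \<ge> 2" "N > 0" "\<And>t. g\<^sub>s (t mod int N) = g\<^sub>s t" "\<And>t. g\<^sub>o (t mod int N) = g\<^sub>o t"
    "dft N g\<^sub>s r = complex_of_real a\<^sub>s" "dft N g\<^sub>o r = complex_of_real a\<^sub>o"
  shows "kernel_eigenvalue ({..<n} \<times> {..<N}) (block_circulant g\<^sub>s g\<^sub>o) (a\<^sub>s - a\<^sub>o)"
proof -
  define c where "c k = cos (2 * pi * real r * real k / real N)" for k :: nat
  define u where "u i = (if i = 0 then 1 else 0) - (if i = 1 then 1 else 0 :: real)" for i :: nat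
  have "(\<Sum>i<n. u i) = 0"
    using assms(1) by (simp add: u_def sum_subtractf)
  then have "(\<Sum>k<N. g\<^sub>o (int k - int j) * (\<Sum>i'<n. u i' * c k)) = 0" for j
    by (simp flip: sum_distrib_right)
  moreover have "(\<Sum>k<N. g (int k - int j) * (u i * c k)) = u i * (a * c j)"
    if "\<And>t. g (t mod int N) = g t" "dft N g r = complex_of_real a" for g a i j
  proof -
    have "(\<Sum>k<N. g (int k - int j) * (u i * c k)) = u i * (\<Sum>k<N. g (int k - int j) * c k)"
      by (simp add: sum_distrib_left mult_ac)
    then show ?thesis
      using circulant_mult_cos[OF assms(2) that] by (simp add: c_def)
  qed
  ultimately have "(\<Sum>v\<in>{..<n} \<times> {..<N}. block_circulant g\<^sub>s g\<^sub>o (i, j) v * (u (fst v) * c (snd v)))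
      = (a\<^sub>s - a\<^sub>o) * (u i * c j)" if "i < n" for i j
    using block_circulant_mult[OF that, where N = N and g\<^sub>s = g\<^sub>s and g\<^sub>o = g\<^sub>o and j = j
        and x = "\<lambda>v. u (fst v) * c (snd v)"] assms(3-6)
    by (simp add: algebra_simps)
  moreover have "u 0 * c 0 \<noteq> 0"
    by (simp add: u_def c_def)
  ultimately show ?thesis
    unfolding kernel_eigenvalue_def using assms(1,2)
    by (intro exI[of _ "\<lambda>v. u (fst v) * c (snd v)"] conjI bexI[of _ "(0, 0)"]) auto
qed

lemma block_circulant_eigenvalue_sum:
  assumes "n > 0" "N > 0" "\<And>t. g\<^sub>s (t mod int N) = g\<^sub>s t" "\<And>t. g\<^sub>o (t mod int N) = g\<^sub>o t"
    "dft N g\<^sub>s r = complex_of_real a\<^sub>s" "dft N g\<^sub>o r = complex_of_real a\<^sub>o"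
  shows "kernel_eigenvalue ({..<n} \<times> {..<N}) (block_circulant g\<^sub>s g\<^sub>o) (a\<^sub>s + (real n - 1) * a\<^sub>o)"
proof -
  define c where "c k = cos (2 * pi * real r * real k / real N)" for k :: nat
  have circ: "(\<Sum>k<N. g (int k - int j) * c k) = a * c j"
    if "\<And>t. g (t mod int N) = g t" "dft N g r = complex_of_real a" for g a j
    using circulant_mult_cos[OF assms(2) that] by (simp add: c_def)
  have "(\<Sum>v\<in>{..<n} \<times> {..<N}. block_circulant g\<^sub>s g\<^sub>o (i, j) v * c (snd v))
      = (a\<^sub>s + (real n - 1) * a\<^sub>o) * c j" if "i < n" for i j
  proof -
    have "(\<Sum>k<N. g\<^sub>o (int k - int j) * (\<Sum>i'<n. c k)) = real n * (\<Sum>k<N. g\<^sub>o (int k - int j) * c k)"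
      by (simp add: sum_distrib_left mult_ac)
    then have "(\<Sum>k<N. g\<^sub>o (int k - int j) * (\<Sum>i'<n. c k)) = real n * (a\<^sub>o * c j)"
      using circ[OF assms(4,6)] by simp
    then show ?thesis
      using block_circulant_mult[OF that, where N = N and g\<^sub>s = g\<^sub>s and g\<^sub>o = g\<^sub>o and j = j
          and x = "\<lambda>v. c (snd v)"] circ[OF assms(3,5)] circ[OF assms(4,6)]
      by (simp add: algebra_simps)
  qed
  moreover have "c 0 \<noteq> 0"
    by (simp add: c_def)
  ultimately show ?thesis
    unfolding kernel_eigenvalue_def using assms(1,2)
    by (intro exI[of _ "\<lambda>v. c (snd v)"] conjI bexI[of _ "(0, 0)"]) auto
qed

lemma fourier_transform_block_circulant_mult:
  fixes x :: "nat \<times> nat \<Rightarrow> real"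
  assumes "N > 0" "\<And>t. g\<^sub>s (t mod int N) = g\<^sub>s t" "\<And>t. g\<^sub>o (t mod int N) = g\<^sub>o t"
    "\<And>t. g\<^sub>s (- t) = g\<^sub>s t" "\<And>t. g\<^sub>o (- t) = g\<^sub>o t"
    "dft N g\<^sub>s r = complex_of_real a\<^sub>s" "dft N g\<^sub>o r = complex_of_real a\<^sub>o" "i < n"
  defines "X \<equiv> \<lambda>i. \<Sum>k<N. complex_of_real (x (i, k)) * fourier_char N r (int k)"
  shows "(\<Sum>j<N. complex_of_real (\<Sum>v\<in>{..<n} \<times> {..<N}. block_circulant g\<^sub>s g\<^sub>o (i, j) v * x v)
           * fourier_char N r (int j))
       = complex_of_real a\<^sub>o * (\<Sum>i'<n. X i') + complex_of_real (a\<^sub>s - a\<^sub>o) * X i"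
proof -
  let ?F = "\<lambda>y::nat \<Rightarrow> real. \<Sum>j<N. complex_of_real (y j) * fourier_char N r (int j)"
  have "?F (\<lambda>j. \<Sum>v\<in>{..<n} \<times> {..<N}. block_circulant g\<^sub>s g\<^sub>o (i, j) v * x v)
      = ?F (\<lambda>j. \<Sum>k<N. g\<^sub>o (int k - int j) * (\<Sum>i'<n. x (i', k)))
        + ?F (\<lambda>j. \<Sum>k<N. g\<^sub>s (int k - int j) * x (i, k)) - ?F (\<lambda>j. \<Sum>k<N. g\<^sub>o (int k - int j) * x (i, k))"
    unfolding block_circulant_mult[OF assms(8)] by (simp add: sum.distrib sum_subtractf algebra_simps)
  also have "\<dots> = complex_of_real a\<^sub>o * ?F (\<lambda>k. \<Sum>i'<n. x (i', k))
      + complex_of_real a\<^sub>s * X i - complex_of_real a\<^sub>o * X i"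
    unfolding fourier_transform_circulant_mult[where g = g\<^sub>o, OF assms(1,3,5)]
      fourier_transform_circulant_mult[where g = g\<^sub>s, OF assms(1,2,4)]
    using assms(6,7) by (simp add: X_def)
  also have "?F (\<lambda>k. \<Sum>i'<n. x (i', k)) = (\<Sum>i'<n. X i')"
    unfolding X_def by (subst sum.swap) (simp add: sum_distrib_right)
  finally show ?thesis
    by (simp add: algebra_simps)
qed

lemma block_circulant_eigenvalue_cases:
  assumes "N > 0" "\<And>t. g\<^sub>s (t mod int N) = g\<^sub>s t" "\<And>t. g\<^sub>o (t mod int N) = g\<^sub>o t"
    "\<And>t. g\<^sub>s (- t) = g\<^sub>s t" "\<And>t. g\<^sub>o (- t) = g\<^sub>o t"
    "\<And>r. r < N \<Longrightarrow> dft N g\<^sub>s r = complex_of_real (a\<^sub>s r)"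
    "\<And>r. r < N \<Longrightarrow> dft N g\<^sub>o r = complex_of_real (a\<^sub>o r)"
    "kernel_eigenvalue ({..<n} \<times> {..<N}) (block_circulant g\<^sub>s g\<^sub>o) \<mu>"
  shows "\<exists>r<N. \<mu> = a\<^sub>s r - a\<^sub>o r \<or> \<mu> = a\<^sub>s r + (real n - 1) * a\<^sub>o r"
proof -
  obtain x where nonzero: "\<exists>v\<in>{..<n} \<times> {..<N}. x v \<noteq> 0"
    and eigen: "\<And>v. v \<in> {..<n} \<times> {..<N} \<Longrightarrow>
      (\<Sum>w\<in>{..<n} \<times> {..<N}. block_circulant g\<^sub>s g\<^sub>o v w * x w) = \<mu> * x v"
    using assms(8) unfolding kernel_eigenvalue_def by blast
  obtain i\<^sub>0 j\<^sub>0 where ij\<^sub>0: "i\<^sub>0 < n" "j\<^sub>0 < N" "x (i\<^sub>0, j\<^sub>0) \<noteq> 0"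
    using nonzero by auto
  define X where "X r i = (\<Sum>k<N. complex_of_real (x (i, k)) * fourier_char N r (int k))" for r i
  obtain r where r: "r < N" "X r i\<^sub>0 \<noteq> 0"
    using fourier_transform_eq_0_imp_eq_0[OF assms(1), of "\<lambda>k. complex_of_real (x (i\<^sub>0, k))" j\<^sub>0] ij\<^sub>0
    by (auto simp: X_def)
  have "complex_of_real (a\<^sub>o r) * (\<Sum>i'<n. X r i') + complex_of_real (a\<^sub>s r - a\<^sub>o r) * X r i
      = complex_of_real \<mu> * X r i" if "i < n" for i
  proof -
    have "(\<Sum>j<N. complex_of_real (\<Sum>v\<in>{..<n} \<times> {..<N}. block_circulant g\<^sub>s g\<^sub>o (i, j) v * x v)
        * fourier_char N r (int j)) = (\<Sum>j<N. complex_of_real (\<mu> * x (i, j)) * fourier_char N r (int j))"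
      using eigen that by (intro sum.cong refl) simp
    then show ?thesis
      unfolding fourier_transform_block_circulant_mult[OF assms(1-5) assms(6,7)[OF r(1)] that]
      by (simp add: X_def sum_distrib_left mult_ac)
  qed
  then have "complex_of_real \<mu> = complex_of_real (a\<^sub>s r - a\<^sub>o r)
      \<or> complex_of_real \<mu> = complex_of_real (a\<^sub>s r - a\<^sub>o r) + of_nat n * complex_of_real (a\<^sub>o r)"
    by (rule all_ones_plus_scalar_eigenvalue_cases[where X = "X r", OF _ ij\<^sub>0(1) r(2)])
  then have "\<mu> = a\<^sub>s r - a\<^sub>o r \<or> \<mu> = a\<^sub>s r + (real n - 1) * a\<^sub>o r"
    by (metis (mono_tags, opaque_lifting) of_real_eq_iff of_real_add of_real_mult of_real_of_nat_eq
        add_diff_eq diff_add_eq left_diff_distrib' mult_1)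
  then show ?thesis
    using r(1) by blast
qed

lemma block_circulant_spectrum:
  assumes "n \<ge> 2" "N > 0" "\<And>t. g\<^sub>s (t mod int N) = g\<^sub>s t" "\<And>t. g\<^sub>o (t mod int N) = g\<^sub>o t"
    "\<And>t. g\<^sub>s (- t) = g\<^sub>s t" "\<And>t. g\<^sub>o (- t) = g\<^sub>o t"
    "\<And>r. r < N \<Longrightarrow> dft N g\<^sub>s r = complex_of_real (a\<^sub>s r)"
    "\<And>r. r < N \<Longrightarrow> dft N g\<^sub>o r = complex_of_real (a\<^sub>o r)"
  shows "{\<mu>. kernel_eigenvalue ({..<n} \<times> {..<N}) (block_circulant g\<^sub>s g\<^sub>o) \<mu>}
       = (\<lambda>r. a\<^sub>s r - a\<^sub>o r) ` {..<N} \<union> (\<lambda>r. a\<^sub>s r + (real n - 1) * a\<^sub>o r) ` {..<N}"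
  using block_circulant_eigenvalue_cases[OF assms(2-8)]
    block_circulant_eigenvalue_diff[OF assms(1-4) assms(7,8)]
    block_circulant_eigenvalue_sum[of n, OF _ assms(2-4) assms(7,8)] assms(1)
  by fastforce

section \<open>Fourier coefficients of the distance in an even cycle\<close>

lemma cycle_dist_second_difference:
  assumes "k < 2 * m"
  shows "real (cycle_dist (2 * m) (int k - 1)) + real (cycle_dist (2 * m) (int k + 1))
       = 2 * real (cycle_dist (2 * m) (int k)) + (if k = 0 then 2 else 0) - (if k = m then 2 else 0)"
proof -
  have "m > 0" "int m \<ge> 1"
    using assms by simp_all
  have pred: "int (cycle_dist (2 * m) (int k - 1))
      = (if k = 0 then 1 else min (int k - 1) (int (2 * m) - (int k - 1)))"
    using cycle_dist_eq_min[of "int k - 1" "2 * m"] cycle_dist_eq_min[of 1 "2 * m"] assms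
      cycle_dist_uminus[of "2 * m" 1] \<open>m > 0\<close> by auto
  have succ: "int (cycle_dist (2 * m) (int k + 1)) = min (int k + 1) (int (2 * m) - (int k + 1))"
    using assms by (intro cycle_dist_eq_min) auto
  have here: "int (cycle_dist (2 * m) (int k)) = min (int k) (int (2 * m) - int k)"
    using assms by (intro cycle_dist_eq_min) auto
  consider "k = 0" | "0 < k" "k < m" | "k = m" | "m < k"
    by linarith
  then have "int (cycle_dist (2 * m) (int k - 1)) + int (cycle_dist (2 * m) (int k + 1))
      = 2 * int (cycle_dist (2 * m) (int k)) + (if k = 0 then 2 else 0) - (if k = m then 2 else 0)"
    unfolding pred succ here using assms \<open>m > 0\<close> by cases (simp_all add: min_def)
  then show ?thesis
    by (auto dest!: arg_cong[where f = real_of_int] split: if_splits)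
qed

lemma dft_cycle_dist_eq_0:
  assumes "N > 0"
  shows "dft N (\<lambda>t. if cycle_dist N t = 0 then 1 else 0) r = 1"
proof -
  have "dft N (\<lambda>t. if cycle_dist N t = 0 then 1 else 0) r = (\<Sum>k<N. if k = 0 then 1 else 0)"
    unfolding dft_def by (intro sum.cong refl) (auto simp: cycle_dist_of_nat)
  then show ?thesis
    using assms by simp
qed

lemma dft_cycle_dist_eq_1:
  assumes "N \<ge> 3"
  shows "dft N (\<lambda>t. if cycle_dist N t = 1 then 1 else 0) r
       = complex_of_real (2 * cos (2 * pi * real r / real N))"
proof -
  have "dft N (\<lambda>t. if cycle_dist N t = 1 then 1 else 0) r
      = (\<Sum>k<N. (if k = 1 then fourier_char N r 1 else 0)
                + (if k = N - 1 then fourier_char N r (int (N - 1)) else 0))"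
    unfolding dft_def using assms by (intro sum.cong refl) (auto simp: cycle_dist_of_nat)
  also have "\<dots> = fourier_char N r 1 + fourier_char N r (-1)"
    using assms fourier_char_mod[of N r "-1"] by (simp add: sum.distrib zmod_minus1 of_nat_diff)
  also have "\<dots> = complex_of_real (2 * cos (2 * pi * real r / real N))"
    using fourier_char_add_uminus[of N r 1] by simp
  finally show ?thesis .
qed

lemma sum_cycle_dist:
  "(\<Sum>k<2 * m. cycle_dist (2 * m) (int k)) = m ^ 2"
proof -
  let ?D = "\<lambda>k. cycle_dist (2 * m) (int k)"
  have antipodal: "?D k + ?D (k + m) = m" if "k < m" for k
    using cycle_dist_of_nat[of k "2 * m"] cycle_dist_of_nat[of "k + m" "2 * m"] that by simp
  have "(\<Sum>k<2 * m. ?D k) = (\<Sum>k<m. ?D k) + (\<Sum>k\<in>{m..<2 * m}. ?D k)"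
    using sum.atLeastLessThan_concat[of 0 m "2 * m" ?D] by (simp add: atLeast0LessThan)
  also have "(\<Sum>k\<in>{m..<2 * m}. ?D k) = (\<Sum>k<m. ?D (k + m))"
    using sum.shift_bounds_nat_ivl[of ?D 0 m m] by (simp add: mult_2 atLeast0LessThan)
  also have "(\<Sum>k<m. ?D k) + (\<Sum>k<m. ?D (k + m)) = (\<Sum>k<m. m)"
    unfolding sum.distrib[symmetric] by (intro sum.cong refl) (simp only: lessThan_iff antipodal)
  finally show ?thesis
    by (simp add: power2_eq_square)
qed

definition even_cycle_dist_eigenvalue :: "nat \<Rightarrow> nat \<Rightarrow> real" where
  "even_cycle_dist_eigenvalue m r =
     (if r = 0 then (real m)\<^sup>2 else if even r then 0 else - 1 / (sin (pi * real r / (2 * real m)))\<^sup>2)"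

lemma dft_cycle_dist_second_difference:
  assumes "m > 0"
  shows "dft (2 * m) (\<lambda>t. real (cycle_dist (2 * m) (t - 1)) + real (cycle_dist (2 * m) (t + 1))) r
       = 2 * dft (2 * m) (\<lambda>t. real (cycle_dist (2 * m) t)) r + 2 - 2 * (- 1) ^ r"
proof -
  let ?D = "\<lambda>t. real (cycle_dist (2 * m) t)"
  have "dft (2 * m) (\<lambda>t. ?D (t - 1) + ?D (t + 1)) r
      = (\<Sum>k<2 * m. complex_of_real (2 * ?D (int k) + (if k = 0 then 2 else 0) - (if k = m then 2 else 0))
           * fourier_char (2 * m) r (int k))"
    unfolding dft_def by (intro sum.cong refl) (simp only: cycle_dist_second_difference lessThan_iff)
  also have "\<dots> = (\<Sum>k<2 * m. 2 * (complex_of_real (?D (int k)) * fourier_char (2 * m) r (int k))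
      + (if k = 0 then 2 else 0) - (if k = m then 2 * fourier_char (2 * m) r (int m) else 0))"
    by (intro sum.cong refl) (auto simp: algebra_simps)
  also have "\<dots> = 2 * dft (2 * m) ?D r + 2 - 2 * (- 1) ^ r"
    using assms by (simp add: sum.distrib sum_subtractf sum_distrib_left dft_def fourier_char_half)
  finally show ?thesis .
qed

lemma dft_cycle_dist:
  assumes "m > 0" "r < 2 * m"
  shows "dft (2 * m) (\<lambda>t. real (cycle_dist (2 * m) t)) r = complex_of_real (even_cycle_dist_eigenvalue m r)"
proof (cases "r = 0")
  case True
  then have "dft (2 * m) (\<lambda>t. real (cycle_dist (2 * m) t)) r
      = of_nat (\<Sum>k<2 * m. cycle_dist (2 * m) (int k))"
    by (simp add: dft_def fourier_char_def)
  then show ?thesis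
    using True by (simp add: sum_cycle_dist even_cycle_dist_eigenvalue_def)
next
  case False
  define D where "D = (\<lambda>t. real (cycle_dist (2 * m) t))"
  define S where "S = dft (2 * m) D r"
  define \<theta> where "\<theta> = pi * real r / (2 * real m)"
  have per: "D (t mod int (2 * m)) = D t" for t
    by (simp only: D_def cycle_dist_mod)
  have "cos (2 * pi * real r / real (2 * m)) = 1 - 2 * (sin \<theta>)\<^sup>2"
    using cos_double_sin[of \<theta>] by (simp add: \<theta>_def)
  then have "(2 - complex_of_real (4 * (sin \<theta>)\<^sup>2)) * S
      = dft (2 * m) (\<lambda>t. D (t - 1) + D (t + 1)) r"
    unfolding S_def using dft_second_difference[where g = D, OF _ per] assms(1) by simp
  also have "\<dots> = 2 * S + (2 - 2 * (- 1) ^ r)"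
    using dft_cycle_dist_second_difference[OF assms(1)] by (simp add: S_def D_def)
  finally have "(2 - complex_of_real (4 * (sin \<theta>)\<^sup>2)) * S = 2 * S + (2 - 2 * (- 1) ^ r)" .
  moreover have "c * S = - b" if "(2 - c) * S = 2 * S + b" for b c :: complex
    using that by algebra
  ultimately have "complex_of_real (4 * (sin \<theta>)\<^sup>2) * S = 2 * (- 1) ^ r - 2"
    by fastforce
  moreover have "sin \<theta> > 0"
    unfolding \<theta>_def using assms False by (intro sin_gt_zero) (auto simp: field_simps)
  ultimately have "S = (2 * (- 1) ^ r - 2) / complex_of_real (4 * (sin \<theta>)\<^sup>2)"
    by (simp add: field_simps)
  then show ?thesis
    using False by (auto simp: S_def D_def \<theta>_def even_cycle_dist_eigenvalue_def field_simps)
qed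

lemma dft_dist_same_row:
  assumes "m \<ge> 2" "r < 2 * m"
  shows "dft (2 * m) (dist_same_row (2 * m)) r
       = complex_of_real (even_cycle_dist_eigenvalue m r + 4 * cos (pi * real r / real m))"
proof -
  have "dist_same_row (2 * m)
      = (\<lambda>t. real (cycle_dist (2 * m) t) + 2 * (if cycle_dist (2 * m) t = 1 then 1 else 0))"
    by (simp add: fun_eq_iff dist_same_row_def)
  moreover have "dft (2 * m) (\<lambda>t. if cycle_dist (2 * m) t = 1 then 1 else 0) r
      = complex_of_real (2 * cos (pi * real r / real m))"
    using dft_cycle_dist_eq_1[of "2 * m" r] assms(1) by simp
  ultimately show ?thesis
    using assms by (simp add: dft_add dft_cmult dft_cycle_dist)
qed

lemma dft_dist_other_row:
  assumes "m > 0" "r < 2 * m"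
  shows "dft (2 * m) (dist_other_row (2 * m)) r = complex_of_real (even_cycle_dist_eigenvalue m r + 2)"
proof -
  have "dist_other_row (2 * m)
      = (\<lambda>t. real (cycle_dist (2 * m) t) + 2 * (if cycle_dist (2 * m) t = 0 then 1 else 0))"
    by (simp add: fun_eq_iff dist_other_row_def)
  then show ?thesis
    using assms by (simp add: dft_add dft_cmult dft_cycle_dist dft_cycle_dist_eq_0)
qed

section \<open>The distance spectrum of the Kronecker product\<close>

lemma distance_spectrum_kron_complete_even_cycle:
  assumes "n \<ge> 3" "m \<ge> 2"
  shows "{\<mu>. distance_eigenvalue ({..<n} \<times> {..<2 * m}) (kron_adj (complete_adj n) (cycle_adj (2 * m))) \<mu>}
       = (\<lambda>r. 4 * cos (pi * real r / real m) - 2) ` {..<2 * m}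
         \<union> (\<lambda>r. real n * even_cycle_dist_eigenvalue m r + 2 * (real n - 1) + 4 * cos (pi * real r / real m))
             ` {..<2 * m}"
proof -
  let ?ev = "even_cycle_dist_eigenvalue m"
  have kernel: "distance_eigenvalue ({..<n} \<times> {..<2 * m}) (kron_adj (complete_adj n) (cycle_adj (2 * m)))
      = kernel_eigenvalue ({..<n} \<times> {..<2 * m})
          (block_circulant (dist_same_row (2 * m)) (dist_other_row (2 * m)))"
    unfolding distance_eigenvalue_iff_kernel_eigenvalue
    using graph_dist_kron_complete_cycle[OF assms(1)] by (intro kernel_eigenvalue_cong) auto
  have "{\<mu>. distance_eigenvalue ({..<n} \<times> {..<2 * m}) (kron_adj (complete_adj n) (cycle_adj (2 * m))) \<mu>}
      = (\<lambda>r. (?ev r + 4 * cos (pi * real r / real m)) - (?ev r + 2)) ` {..<2 * m}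
        \<union> (\<lambda>r. (?ev r + 4 * cos (pi * real r / real m)) + (real n - 1) * (?ev r + 2)) ` {..<2 * m}"
    unfolding kernel
  proof (rule block_circulant_spectrum)
    show "dft (2 * m) (dist_same_row (2 * m)) r = complex_of_real (?ev r + 4 * cos (pi * real r / real m))"
      if "r < 2 * m" for r
      using dft_dist_same_row[OF assms(2) that] .
    show "dft (2 * m) (dist_other_row (2 * m)) r = complex_of_real (?ev r + 2)" if "r < 2 * m" for r
      using dft_dist_other_row[OF _ that] assms(2) by simp
  qed (use assms in simp, use assms in simp,
      (fact dist_same_row_mod dist_other_row_mod dist_same_row_uminus dist_other_row_uminus)+)
  then show ?thesis
    by (simp add: algebra_simps)
qed

lemma image_lessThan_double:
  fixes m :: nat
  assumes "m > 0"
  shows "f ` {..<2 * m}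
       = {f 0} \<union> {f (2 * p) | p. 1 \<le> p \<and> p \<le> m - 1} \<union> {f (2 * q - 1) | q. 1 \<le> q \<and> q \<le> m}"
proof -
  have "r \<in> {0} \<union> {2 * p | p. 1 \<le> p \<and> p \<le> m - 1} \<union> {2 * q - 1 | q. 1 \<le> q \<and> q \<le> m}"
    if "r < 2 * m" for r
  proof (cases "even r")
    case True
    then show ?thesis
      using that by (cases "r = 0") (auto intro!: exI[of _ "r div 2"])
  next
    case False
    then show ?thesis
      using that by (auto intro!: exI[of _ "(r + 1) div 2"])
  qed
  then have "{..<2 * m}
      = {0} \<union> {2 * p | p. 1 \<le> p \<and> p \<le> m - 1} \<union> {2 * q - 1 | q. 1 \<le> q \<and> q \<le> m}"
    using assms by auto
  then show ?thesis
    by auto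
qed

lemma image_kron_distance_eigenvalue_by_parity:
  fixes n m :: nat
  assumes "m > 0"
  shows "(\<lambda>r. real n * even_cycle_dist_eigenvalue m r + 2 * (real n - 1) + 4 * cos (pi * real r / real m))
           ` {..<2 * m}
       = {2 * (real n + 1) + real n * (real m)\<^sup>2}
         \<union> {2 * (real n - 1) + 4 * cos (2 * real p * pi / real m) | p. 1 \<le> p \<and> p \<le> m - 1}
         \<union> {2 * (real n - 1) + 4 * cos ((2 * real q - 1) * pi / real m)
              - real n * (1 / (sin ((2 * real q - 1) * pi / (2 * real m)))\<^sup>2) | q. 1 \<le> q \<and> q \<le> m}"
    (is "?f ` _ = _")
proof -
  have "?f 0 = 2 * (real n + 1) + real n * (real m)\<^sup>2"
    by (simp add: even_cycle_dist_eigenvalue_def algebra_simps)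
  moreover have "?f (2 * p) = 2 * (real n - 1) + 4 * cos (2 * real p * pi / real m)" if "1 \<le> p" for p
    using that by (simp add: even_cycle_dist_eigenvalue_def mult_ac)
  moreover have "?f (2 * q - 1) = 2 * (real n - 1) + 4 * cos ((2 * real q - 1) * pi / real m)
      - real n * (1 / (sin ((2 * real q - 1) * pi / (2 * real m)))\<^sup>2)" if "1 \<le> q" for q
  proof -
    have "real (2 * q - 1) = 2 * real q - 1" "odd (2 * q - 1)" "2 * q - 1 \<noteq> 0"
      using that by (auto simp: of_nat_diff)
    then show ?thesis
      by (simp add: even_cycle_dist_eigenvalue_def mult_ac)
  qed
  ultimately show ?thesis
    unfolding image_lessThan_double[OF assms, of ?f] by force
qed

theorem theorem4p1:
  fixes n m :: nat
  assumes "n \<ge> 3" and "m \<ge> 2"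
  shows "{\<mu>. distance_eigenvalue ({..<n} \<times> {..<2*m})
                 (kron_adj (complete_adj n) (cycle_adj (2*m))) \<mu>}
         = {2 * (real n + 1) + real n * (real m)^2}
           \<union> {2 * (real n - 1) + 4 * cos (2 * real p * pi / real m) | p. 1 \<le> p \<and> p \<le> m - 1}
           \<union> {2 * (real n - 1) + 4 * cos ((2 * real q - 1) * pi / real m)
                - real n * (1 / (sin ((2 * real q - 1) * pi / (2 * real m)))^2) | q. 1 \<le> q \<and> q \<le> m}
           \<union> {4 * cos (pi / real m * real r) - 2 | r. r \<le> 2 * m - 1}"
proof -
  have "m > 0"
    using assms(2) by simp
  then have "(\<lambda>r. 4 * cos (pi * real r / real m) - 2) ` {..<2 * m}
      = {4 * cos (pi / real m * real r) - 2 | r. r \<le> 2 * m - 1}"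
    by (auto simp: image_def)
  then show ?thesis
    unfolding distance_spectrum_kron_complete_even_cycle[OF assms]
      image_kron_distance_eigenvalue_by_parity[OF \<open>m > 0\<close>]
    by blast
qed

end
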